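(* Fix the orthonormal basis $\{|0\rangle,|1\rangle\}$ of $\mathbb{C}^2$ and, for a Hermitian operator $X$ on $\mathbb{C}^2$, let $C(X):=\big\|X-\sum_{i\in\{0,1\}}\langle i|X|i\rangle\,|i\rangle\langle i|\big\|_1$ (trace norm). For every $\varepsilon>0$ there exist a finite set $\mathcal{S}$ of qubit density operators and a finite set of qubit POVMs, with $\mathcal{E}$ the set of all their POVM elements, such that: (i) $C(X)\le\varepsilon$ for every $X\in\mathcal{S}\cup\mathcal{E}$; (ii) $C(\rho)>0$ for some $\rho\in\mathcal{S}$ and $C(E)>0$ for some $E\in\mathcal{E}$; and (iii) the prepare-and-measure scenario $(\mathcal{S},\mathcal{E})$ admits no noncontextual ontological model.
   Context: A noncontextual ontological model for a quantum prepare-and-measure scenario consisting of a finite set $\mathcal{S}$ of density operators and a finite set $\mathcal{E}$ of effects (the elements of finitely many POVMs) is: a finite set $\Lambda$; a map $\rho\mapsto\mu_\rho$ from the convex hull of $\mathcal{S}$ to probability distributions on $\Lambda$ that is convex-linear (so it depends only on the operator, not on how it is decomposed as a mixture); and a map $E\mapsto\xi_E$ from the convex hull of $\mathcal{E}\cup\{0,\mathbb{1}\}$ to functions $\Lambda\to[0,1]$ that is convex-linear with $\xi_{\mathbb{1}}\equiv 1$; such that $\mathrm{Tr}(E\rho)=\sum_{\lambda\in\Lambda}\xi_E(\lambda)\mu_\rho(\lambda)$ for all $\rho\in\mathcal{S}$, $E\in\mathcal{E}$. (Equivalently, the associated GPT fragment is simplex-embeddable.) *)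

theory Defs
  imports "HOL-Analysis.Analysis"
begin

text \<open>Qubit operators: 2x2 complex matrices w.r.t. the fixed orthonormal basis
  |0>, |1> of C^2 (indices 1 and 2 of the numeral type 2).\<close>
type_synonym qop = "complex^2^2"

definition adj :: "qop \<Rightarrow> qop" where
  "adj A = (\<chi> i j. cnj (A $ j $ i))"

definition hermitian :: "qop \<Rightarrow> bool" where
  "hermitian A \<longleftrightarrow> adj A = A"

definition psd :: "qop \<Rightarrow> bool" where
  "psd A \<longleftrightarrow> hermitian A \<and>
     (\<forall>x::complex^2. 0 \<le> Re (\<Sum>i\<in>UNIV. \<Sum>j\<in>UNIV. cnj (x $ i) * A $ i $ j * x $ j))"

definition mtrace :: "qop \<Rightarrow> complex" where
  "mtrace A = (\<Sum>i\<in>UNIV. A $ i $ i)"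

definition abs_op :: "qop \<Rightarrow> qop" where
  "abs_op A = (THE P. psd P \<and> P ** P = adj A ** A)"

definition trace_norm :: "qop \<Rightarrow> real" where
  "trace_norm A = Re (mtrace (abs_op A))"

definition dephase :: "qop \<Rightarrow> qop" where
  "dephase X = (\<chi> i j. if i = j then X $ i $ i else 0)"

definition coh :: "qop \<Rightarrow> real" where
  "coh X = trace_norm (X - dephase X)"

definition density :: "qop \<Rightarrow> bool" where
  "density \<rho> \<longleftrightarrow> psd \<rho> \<and> mtrace \<rho> = 1"

definition is_povm :: "qop list \<Rightarrow> bool" where
  "is_povm M \<longleftrightarrow> (\<forall>E\<in>set M. psd E) \<and> sum_list M = mat 1"

definition povm_effects :: "qop list set \<Rightarrow> qop set" where
  "povm_effects Ms = (\<Union>M\<in>Ms. set M)"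

definition convex_linear_on :: "qop set \<Rightarrow> (qop \<Rightarrow> nat \<Rightarrow> real) \<Rightarrow> nat set \<Rightarrow> bool" where
  "convex_linear_on C f Lam \<longleftrightarrow>
     (\<forall>a\<in>C. \<forall>b\<in>C. \<forall>p::real. 0 \<le> p \<and> p \<le> 1 \<longrightarrow>
        (\<forall>l\<in>Lam. f (p *\<^sub>R a + (1 - p) *\<^sub>R b) l = p * f a l + (1 - p) * f b l))"

text \<open>Noncontextual ontological model for (S, E) with a finite ontic space
  (w.l.o.g. a finite set of naturals).\<close>
definition nc_model :: "qop set \<Rightarrow> qop set \<Rightarrow> bool" where
  "nc_model S Es \<longleftrightarrow>
    (\<exists>(Lam::nat set) (\<mu>::qop \<Rightarrow> nat \<Rightarrow> real) (\<xi>::qop \<Rightarrow> nat \<Rightarrow> real).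
       finite Lam \<and>
       (\<forall>\<rho>\<in>convex hull S. (\<forall>l\<in>Lam. 0 \<le> \<mu> \<rho> l) \<and> (\<Sum>l\<in>Lam. \<mu> \<rho> l) = 1) \<and>
       convex_linear_on (convex hull S) \<mu> Lam \<and>
       (\<forall>E\<in>convex hull (Es \<union> {0, mat 1}). \<forall>l\<in>Lam. 0 \<le> \<xi> E l \<and> \<xi> E l \<le> 1) \<and>
       convex_linear_on (convex hull (Es \<union> {0, mat 1})) \<xi> Lam \<and>
       (\<forall>l\<in>Lam. \<xi> (mat 1) l = 1) \<and>
       (\<forall>\<rho>\<in>S. \<forall>E\<in>Es. mtrace (E ** \<rho>) = complex_of_real (\<Sum>l\<in>Lam. \<xi> E l * \<mu> \<rho> l)))"

end

theory Submission
  imports Defs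
begin

text \<open>Use the six projectors of the computational basis and of its rotations by \<open>\<plusminus>\<theta>\<close>, with
  \<open>(a, b) = (cos \<theta>, sin \<theta>)\<close>, both as states and as effects. In a noncontextual model the
  decompositions \<open>I/2 = (P\<^sub>0 + Q\<^sub>0)/2 = (P\<^sub>\<theta> + Q\<^sub>\<theta>)/2\<close> of the maximally mixed state share one
  weight function \<open>m\<close>, and sharpness of the two measurements forces \<open>\<mu>\<^sub>P = 2 m \<xi>\<^sub>P\<close> for
  \<open>P = P\<^sub>0, P\<^sub>\<theta>\<close>. As \<open>x y + x z - y z \<le> x\<close> on \<open>[0,1]\<^sup>3\<close>, this gives
  \<open>p(P\<^sub>\<theta>|P\<^sub>0) + p(P\<^sub>-\<^sub>\<theta>|P\<^sub>0) - p(P\<^sub>-\<^sub>\<theta>|P\<^sub>\<theta>) \<le> 1\<close>, whereas quantum theory gives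
  \<open>2 cos\<^sup>2 \<theta> - cos\<^sup>2 2\<theta> > 1\<close> for \<open>0 < \<theta> < \<pi>/4\<close>. All six projectors have coherence at most
  \<open>|sin 2\<theta>|\<close>, which is small for small \<open>\<theta>\<close>.\<close>

definition mat2 :: "complex \<Rightarrow> complex \<Rightarrow> complex \<Rightarrow> complex \<Rightarrow> qop" where
  "mat2 a b c d = (\<chi> i j. if i = 1 then (if j = 1 then a else b) else (if j = 1 then c else d))"

lemma mat2_nth [simp]:
  "mat2 a b c d $ 1 $ 1 = a" "mat2 a b c d $ 1 $ 2 = b"
  "mat2 a b c d $ 2 $ 1 = c" "mat2 a b c d $ 2 $ 2 = d"
  by (simp_all add: mat2_def)

lemma eq_mat2_iff: "A = mat2 a b c d \<longleftrightarrow> A$1$1 = a \<and> A$1$2 = b \<and> A$2$1 = c \<and> A$2$2 = d"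
  by (auto simp: vec_eq_iff forall_2)

lemma mat2_eq_mat2_iff [simp]:
  "mat2 a b c d = mat2 a' b' c' d' \<longleftrightarrow> a = a' \<and> b = b' \<and> c = c' \<and> d = d'"
  by (simp add: eq_mat2_iff)

lemma mat2_entries: "A = mat2 (A$1$1) (A$1$2) (A$2$1) (A$2$2)"
  by (simp add: eq_mat2_iff)

lemma mat2_mult [simp]:
  "mat2 a b c d ** mat2 a' b' c' d' = mat2 (a*a' + b*c') (a*b' + b*d') (c*a' + d*c') (c*b' + d*d')"
  by (simp add: eq_mat2_iff matrix_matrix_mult_def sum_2)

lemma mat2_add [simp]: "mat2 a b c d + mat2 a' b' c' d' = mat2 (a+a') (b+b') (c+c') (d+d')"
  by (simp add: eq_mat2_iff)

lemma mat2_diff [simp]: "mat2 a b c d - mat2 a' b' c' d' = mat2 (a-a') (b-b') (c-c') (d-d')"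
  by (simp add: eq_mat2_iff)

lemma mat_1_eq_mat2: "mat 1 = mat2 1 0 0 1"
  by (simp add: eq_mat2_iff mat_def)

lemma adj_mat2 [simp]: "adj (mat2 a b c d) = mat2 (cnj a) (cnj c) (cnj b) (cnj d)"
  by (simp add: eq_mat2_iff adj_def)

lemma mtrace_mat2 [simp]: "mtrace (mat2 a b c d) = a + d"
  by (simp add: mtrace_def sum_2)

lemma dephase_mat2 [simp]: "dephase (mat2 a b c d) = mat2 a 0 0 d"
  by (simp add: eq_mat2_iff dephase_def)

lemma psd_mat2_iff:
  "psd (mat2 a b c d) \<longleftrightarrow> hermitian (mat2 a b c d) \<and>
     (\<forall>x::complex^2. 0 \<le> Re (cnj (x$1) * a * x$1 + cnj (x$1) * b * x$2
                              + cnj (x$2) * c * x$1 + cnj (x$2) * d * x$2))"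
  by (simp add: psd_def sum_2 algebra_simps)

lemma psd_mat2_diag_nonneg:
  assumes "psd (mat2 a b c d)"
  shows "0 \<le> Re a" "0 \<le> Re d"
  using assms[unfolded psd_mat2_iff, THEN conjunct2, rule_format, of "\<chi> i. if i = 1 then 1 else 0"]
    assms[unfolded psd_mat2_iff, THEN conjunct2, rule_format, of "\<chi> i. if i = 1 then 0 else 1"]
  by simp_all

lemma psd_mat2_zero_diag:
  assumes "psd (mat2 0 b c 0)"
  shows "b = 0"
proof -
  have "c = cnj b"
    using assms by (simp add: psd_mat2_iff hermitian_def)
  moreover have "0 \<le> Re (- cnj b * b - c * b)"
    using assms[unfolded psd_mat2_iff, THEN conjunct2, rule_format, of "\<chi> i. if i = 1 then b else -1"]
    by simp
  ultimately have "(Re b)\<^sup>2 + (Im b)\<^sup>2 \<le> 0"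
    by (simp add: power2_eq_square)
  then show "b = 0"
    by (simp add: complex_eq_iff sum_power2_le_zero_iff)
qed

lemma psd_scalar_mat2:
  assumes "0 \<le> c"
  shows "psd (mat2 (of_real c) 0 0 (of_real c))"
proof -
  have "Re (cnj (x$1) * of_real c * x$1 + cnj (x$2) * of_real c * x$2)
      = c * ((Re (x$1))\<^sup>2 + (Im (x$1))\<^sup>2 + (Re (x$2))\<^sup>2 + (Im (x$2))\<^sup>2)" for x :: "complex^2"
    by (simp add: power2_eq_square algebra_simps)
  then show ?thesis
    using assms by (simp add: psd_mat2_iff hermitian_def)
qed

lemma psd_sqrt_scalar_unique:
  assumes "0 \<le> c" and "psd P" and "P ** P = mat2 (of_real (c*c)) 0 0 (of_real (c*c))"
  shows "P = mat2 (of_real c) 0 0 (of_real c)"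
proof -
  define w x y z where "w = P$1$1" and "x = P$1$2" and "y = P$2$1" and "z = P$2$2"
  have P: "P = mat2 w x y z"
    unfolding w_def x_def y_def z_def by (rule mat2_entries)
  have psd: "psd (mat2 w x y z)"
    using assms(2) P by simp
  then have "mat2 (cnj w) (cnj y) (cnj x) (cnj z) = mat2 w x y z"
    by (simp add: psd_def hermitian_def)
  then have "cnj w = w" and y: "y = cnj x" and "cnj z = z"
    by auto
  then have real: "Im w = 0" "Im z = 0"
    by (simp_all add: complex_eq_iff)
  have nonneg: "0 \<le> Re w" "0 \<le> Re z"
    using psd_mat2_diag_nonneg[OF psd] by simp_all
  have eqs: "w*w + x*y = of_real (c*c)" "x * (w + z) = 0" "y*x + z*z = of_real (c*c)"
    using assms(3) P by (simp_all add: algebra_simps)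
  have "x = 0"
  proof (rule ccontr)
    assume "x \<noteq> 0"
    with eqs(2) have "w + z = 0"
      by simp
    with nonneg real have "w = 0" "z = 0"
      by (auto simp: complex_eq_iff)
    with psd have "x = 0"
      using psd_mat2_zero_diag by simp
    with \<open>x \<noteq> 0\<close> show False ..
  qed
  with eqs have "w * w = of_real (c*c)" "z * z = of_real (c*c)"
    by simp_all
  with real have "(Re w)\<^sup>2 = c\<^sup>2" "(Re z)\<^sup>2 = c\<^sup>2"
    by (simp_all add: complex_eq_iff power2_eq_square)
  with nonneg \<open>0 \<le> c\<close> have "Re w = c" "Re z = c"
    by (simp_all add: power2_eq_iff_nonneg)
  with real P y \<open>x = 0\<close> show ?thesis
    by (simp add: complex_eq_iff)
qed

lemma abs_op_scalar:
  assumes "0 \<le> c" and "adj A ** A = mat2 (of_real (c*c)) 0 0 (of_real (c*c))"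
  shows "abs_op A = mat2 (of_real c) 0 0 (of_real c)"
  unfolding abs_op_def assms(2)
proof (rule the_equality)
  show "psd (mat2 (of_real c) 0 0 (of_real c)) \<and>
      mat2 (of_real c) 0 0 (of_real c) ** mat2 (of_real c) 0 0 (of_real c)
        = mat2 (of_real (c*c)) 0 0 (of_real (c*c))"
    using psd_scalar_mat2[OF assms(1)] by simp
qed (use psd_sqrt_scalar_unique[OF assms(1)] in blast)

lemma coh_hermitian:
  assumes "hermitian X"
  shows "coh X = 2 * cmod (X$1$2)"
proof -
  define q where "q = X$1$2"
  have "X$2$1 = cnj q"
    using assms by (simp add: hermitian_def adj_def q_def vec_eq_iff forall_2)
  then have "X - dephase X = mat2 0 q (cnj q) 0"
    by (subst (1 2) mat2_entries) (simp add: q_def)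
  moreover have "cnj q * q = of_real (cmod q * cmod q)"
    by (metis complex_norm_square power2_eq_square mult.commute)
  then have "abs_op (mat2 0 q (cnj q) 0) = mat2 (of_real (cmod q)) 0 0 (of_real (cmod q))"
    by (intro abs_op_scalar) (simp_all add: mult.commute)
  ultimately show ?thesis
    by (simp add: coh_def trace_norm_def q_def)
qed

lemma weight_eq_response_mult:
  fixes x a b :: "'a \<Rightarrow> real"
  assumes "finite L" and "l \<in> L"
    and bounds: "\<And>l. l \<in> L \<Longrightarrow> 0 \<le> x l \<and> x l \<le> 1 \<and> 0 \<le> a l \<and> 0 \<le> b l"
    and "(\<Sum>l\<in>L. x l * a l) = (\<Sum>l\<in>L. a l)" and "(\<Sum>l\<in>L. x l * b l) = 0"
  shows "a l = x l * (a l + b l)"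
proof -
  have "(\<Sum>l\<in>L. (1 - x l) * a l) = 0"
    using assms(4) by (simp add: left_diff_distrib sum_subtractf)
  then have "(1 - x l) * a l = 0"
    using assms(1,2) bounds by (simp add: sum_nonneg_eq_0_iff)
  moreover have "x l * b l = 0"
    using assms(1,2,5) bounds by (simp add: sum_nonneg_eq_0_iff)
  ultimately show ?thesis
    by (auto simp: algebra_simps)
qed

lemma unit_interval_triple_ineq:
  fixes x y z :: real
  assumes "0 \<le> x" "x \<le> 1" "0 \<le> y" "y \<le> 1" "0 \<le> z" "z \<le> 1"
  shows "x * y + x * z - y * z \<le> x"
proof -
  have "0 \<le> x * ((1 - y) * (1 - z))" "0 \<le> (1 - x) * (y * z)"
    using assms by simp_all
  then show ?thesis
    by (simp add: algebra_simps)
qed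

locale nc_representation =
  fixes S Es :: "qop set" and Lam :: "nat set" and \<mu> \<xi> :: "qop \<Rightarrow> nat \<Rightarrow> real"
  assumes finite_Lam: "finite Lam"
    and weights: "\<forall>\<rho>\<in>convex hull S. (\<forall>l\<in>Lam. 0 \<le> \<mu> \<rho> l) \<and> (\<Sum>l\<in>Lam. \<mu> \<rho> l) = 1"
    and weights_convex_linear: "convex_linear_on (convex hull S) \<mu> Lam"
    and responses: "\<forall>E\<in>convex hull (Es \<union> {0, mat 1}). \<forall>l\<in>Lam. 0 \<le> \<xi> E l \<and> \<xi> E l \<le> 1"
    and responses_convex_linear: "convex_linear_on (convex hull (Es \<union> {0, mat 1})) \<xi> Lam"
    and response_one: "\<forall>l\<in>Lam. \<xi> (mat 1) l = 1"
    and reproduces: "\<forall>\<rho>\<in>S. \<forall>E\<in>Es. mtrace (E ** \<rho>) = complex_of_real (\<Sum>l\<in>Lam. \<xi> E l * \<mu> \<rho> l)"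

lemma nc_model_iff_representation:
  "nc_model S Es \<longleftrightarrow> (\<exists>Lam \<mu> \<xi>. nc_representation S Es Lam \<mu> \<xi>)"
  by (simp add: nc_model_def nc_representation_def)

context nc_representation
begin

lemma weight_nonneg: "\<rho> \<in> S \<Longrightarrow> l \<in> Lam \<Longrightarrow> 0 \<le> \<mu> \<rho> l"
  using weights by (simp add: hull_inc)

lemma weight_sum: "\<rho> \<in> S \<Longrightarrow> (\<Sum>l\<in>Lam. \<mu> \<rho> l) = 1"
  using weights by (simp add: hull_inc)

lemma response_bounds: "E \<in> Es \<Longrightarrow> l \<in> Lam \<Longrightarrow> 0 \<le> \<xi> E l \<and> \<xi> E l \<le> 1"
  using responses by (simp add: hull_inc)

lemma Re_mtrace_eq_sum: "\<rho> \<in> S \<Longrightarrow> E \<in> Es \<Longrightarrow> Re (mtrace (E ** \<rho>)) = (\<Sum>l\<in>Lam. \<xi> E l * \<mu> \<rho> l)"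
  using reproduces by simp

lemma weight_midpoint:
  assumes "\<rho> \<in> S" "\<sigma> \<in> S" "l \<in> Lam"
  shows "\<mu> ((1/2) *\<^sub>R \<rho> + (1/2) *\<^sub>R \<sigma>) l = (\<mu> \<rho> l + \<mu> \<sigma> l) / 2"
proof -
  have "\<rho> \<in> convex hull S" "\<sigma> \<in> convex hull S"
    using assms by (simp_all add: hull_inc)
  then have "\<mu> ((1/2) *\<^sub>R \<rho> + (1 - 1/2) *\<^sub>R \<sigma>) l = 1/2 * \<mu> \<rho> l + (1 - 1/2) * \<mu> \<sigma> l"
    using \<open>l \<in> Lam\<close> by (intro weights_convex_linear[unfolded convex_linear_on_def, rule_format]) auto
  then show ?thesis
    by simp
qed

lemma weight_eq_response_of_sharp:
  assumes "\<rho> \<in> S" "\<sigma> \<in> S" "E \<in> Es" "mtrace (E ** \<rho>) = 1" "mtrace (E ** \<sigma>) = 0" "l \<in> Lam"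
  shows "\<mu> \<rho> l = \<xi> E l * (\<mu> \<rho> l + \<mu> \<sigma> l)"
proof (rule weight_eq_response_mult[OF finite_Lam \<open>l \<in> Lam\<close>])
  show "(\<Sum>l\<in>Lam. \<xi> E l * \<mu> \<rho> l) = (\<Sum>l\<in>Lam. \<mu> \<rho> l)"
    using assms Re_mtrace_eq_sum[of \<rho> E] weight_sum[of \<rho>] by simp
  show "(\<Sum>l\<in>Lam. \<xi> E l * \<mu> \<sigma> l) = 0"
    using assms Re_mtrace_eq_sum[of \<sigma> E] by simp
qed (use assms response_bounds weight_nonneg in auto)

lemma sharp_pairs_bound:
  assumes "\<rho>\<^sub>1 \<in> S" "\<sigma>\<^sub>1 \<in> S" "\<rho>\<^sub>2 \<in> S" "\<sigma>\<^sub>2 \<in> S" "E\<^sub>1 \<in> Es" "E\<^sub>2 \<in> Es" "E\<^sub>3 \<in> Es"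
    and "mtrace (E\<^sub>1 ** \<rho>\<^sub>1) = 1" "mtrace (E\<^sub>1 ** \<sigma>\<^sub>1) = 0"
    and "mtrace (E\<^sub>2 ** \<rho>\<^sub>2) = 1" "mtrace (E\<^sub>2 ** \<sigma>\<^sub>2) = 0"
    and "(1/2) *\<^sub>R \<rho>\<^sub>1 + (1/2) *\<^sub>R \<sigma>\<^sub>1 = (1/2) *\<^sub>R \<rho>\<^sub>2 + (1/2) *\<^sub>R \<sigma>\<^sub>2"
  shows "Re (mtrace (E\<^sub>2 ** \<rho>\<^sub>1)) + Re (mtrace (E\<^sub>3 ** \<rho>\<^sub>1)) - Re (mtrace (E\<^sub>3 ** \<rho>\<^sub>2)) \<le> 1"
proof -
  define m where "m l = \<mu> ((1/2) *\<^sub>R \<rho>\<^sub>1 + (1/2) *\<^sub>R \<sigma>\<^sub>1) l" for l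
  have m: "\<mu> \<rho>\<^sub>1 l + \<mu> \<sigma>\<^sub>1 l = 2 * m l" "\<mu> \<rho>\<^sub>2 l + \<mu> \<sigma>\<^sub>2 l = 2 * m l" if "l \<in> Lam" for l
    using weight_midpoint[of \<rho>\<^sub>1 \<sigma>\<^sub>1 l] weight_midpoint[of \<rho>\<^sub>2 \<sigma>\<^sub>2 l] assms that
    by (simp_all add: m_def)
  have pointwise: "\<xi> E\<^sub>2 l * \<mu> \<rho>\<^sub>1 l + \<xi> E\<^sub>3 l * \<mu> \<rho>\<^sub>1 l - \<xi> E\<^sub>3 l * \<mu> \<rho>\<^sub>2 l \<le> \<mu> \<rho>\<^sub>1 l"
    if l: "l \<in> Lam" for l
  proof -
    have sharp: "\<mu> \<rho>\<^sub>1 l = 2 * m l * \<xi> E\<^sub>1 l" "\<mu> \<rho>\<^sub>2 l = 2 * m l * \<xi> E\<^sub>2 l"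
      using weight_eq_response_of_sharp[of \<rho>\<^sub>1 \<sigma>\<^sub>1 E\<^sub>1 l] weight_eq_response_of_sharp[of \<rho>\<^sub>2 \<sigma>\<^sub>2 E\<^sub>2 l]
        m[OF l] assms l by simp_all
    have "0 \<le> m l"
      using m(1)[OF l] weight_nonneg[of \<rho>\<^sub>1 l] weight_nonneg[of \<sigma>\<^sub>1 l] assms l by simp
    have "\<xi> E\<^sub>1 l * \<xi> E\<^sub>2 l + \<xi> E\<^sub>1 l * \<xi> E\<^sub>3 l - \<xi> E\<^sub>2 l * \<xi> E\<^sub>3 l \<le> \<xi> E\<^sub>1 l"
      using response_bounds[of E\<^sub>1 l] response_bounds[of E\<^sub>2 l] response_bounds[of E\<^sub>3 l] assms l
      by (intro unit_interval_triple_ineq) auto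
    with \<open>0 \<le> m l\<close> have "2 * m l * (\<xi> E\<^sub>1 l * \<xi> E\<^sub>2 l + \<xi> E\<^sub>1 l * \<xi> E\<^sub>3 l - \<xi> E\<^sub>2 l * \<xi> E\<^sub>3 l)
        \<le> 2 * m l * \<xi> E\<^sub>1 l"
      by (intro mult_left_mono) auto
    then show ?thesis
      unfolding sharp by (simp add: algebra_simps)
  qed
  have "Re (mtrace (E\<^sub>2 ** \<rho>\<^sub>1)) + Re (mtrace (E\<^sub>3 ** \<rho>\<^sub>1)) - Re (mtrace (E\<^sub>3 ** \<rho>\<^sub>2))
      = (\<Sum>l\<in>Lam. \<xi> E\<^sub>2 l * \<mu> \<rho>\<^sub>1 l + \<xi> E\<^sub>3 l * \<mu> \<rho>\<^sub>1 l - \<xi> E\<^sub>3 l * \<mu> \<rho>\<^sub>2 l)"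
    using assms by (simp add: Re_mtrace_eq_sum sum.distrib sum_subtractf)
  also have "\<dots> \<le> (\<Sum>l\<in>Lam. \<mu> \<rho>\<^sub>1 l)"
    using pointwise by (rule sum_mono)
  also have "\<dots> = 1"
    using assms by (simp add: weight_sum)
  finally show ?thesis .
qed

end

definition proj_real :: "real \<Rightarrow> real \<Rightarrow> qop" where
  "proj_real a b = mat2 (of_real (a*a)) (of_real (a*b)) (of_real (a*b)) (of_real (b*b))"

lemma hermitian_proj_real: "hermitian (proj_real a b)"
  by (simp add: proj_real_def hermitian_def)

lemma psd_proj_real: "psd (proj_real a b)"
proof -
  have "Re (cnj (x$1) * of_real (a*a) * x$1 + cnj (x$1) * of_real (a*b) * x$2
          + cnj (x$2) * of_real (a*b) * x$1 + cnj (x$2) * of_real (b*b) * x$2)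
      = (a * Re (x$1) + b * Re (x$2))\<^sup>2 + (a * Im (x$1) + b * Im (x$2))\<^sup>2" for x :: "complex^2"
    by (simp add: power2_eq_square algebra_simps)
  then show ?thesis
    using hermitian_proj_real by (simp add: proj_real_def psd_mat2_iff)
qed

lemma density_proj_real: "a*a + b*b = 1 \<Longrightarrow> density (proj_real a b)"
  using psd_proj_real by (simp add: density_def proj_real_def flip: of_real_add of_real_mult)

lemma coh_proj_real: "coh (proj_real a b) = 2 * \<bar>a*b\<bar>"
  using coh_hermitian[OF hermitian_proj_real] by (simp add: proj_real_def norm_mult abs_mult)

lemma mtrace_proj_real_mult: "mtrace (proj_real a b ** proj_real c d) = of_real ((a*c + b*d)\<^sup>2)"
  by (simp add: proj_real_def complex_eq_iff power2_eq_square algebra_simps)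

lemma proj_real_add_orthogonal: "a*a + b*b = 1 \<Longrightarrow> proj_real a b + proj_real b (-a) = mat 1"
  by (simp add: proj_real_def mat_1_eq_mat2 complex_eq_iff)

definition basis_povm :: "real \<Rightarrow> real \<Rightarrow> qop list" where
  "basis_povm a b = [proj_real a b, proj_real b (-a)]"

lemma is_povm_basis_povm: "a*a + b*b = 1 \<Longrightarrow> is_povm (basis_povm a b)"
  using psd_proj_real proj_real_add_orthogonal by (simp add: is_povm_def basis_povm_def)

definition three_bases :: "real \<Rightarrow> real \<Rightarrow> qop list set" where
  "three_bases a b = {basis_povm 1 0, basis_povm a b, basis_povm a (-b)}"

lemma povm_effects_three_bases:
  "povm_effects (three_bases a b) =
     {proj_real 1 0, proj_real 0 (-1), proj_real a b, proj_real b (-a), proj_real a (-b), proj_real (-b) (-a)}"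
  by (auto simp: povm_effects_def three_bases_def basis_povm_def)

lemma no_nc_model_three_bases:
  assumes "a*a + b*b = 1" and "0 < b*b" and "b*b < 1/2"
  shows "\<not> nc_model (povm_effects (three_bases a b)) (povm_effects (three_bases a b))"
proof
  let ?S = "povm_effects (three_bases a b)"
  assume "nc_model ?S ?S"
  then obtain Lam \<mu> \<xi> where "nc_representation ?S ?S Lam \<mu> \<xi>"
    by (auto simp: nc_model_iff_representation)
  then have "Re (mtrace (proj_real a b ** proj_real 1 0)) + Re (mtrace (proj_real a (-b) ** proj_real 1 0))
      - Re (mtrace (proj_real a (-b) ** proj_real a b)) \<le> 1"
  proof (rule nc_representation.sharp_pairs_bound[where \<sigma>\<^sub>1 = "proj_real 0 (-1)"
        and \<sigma>\<^sub>2 = "proj_real b (-a)" and E\<^sub>1 = "proj_real 1 0"])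
    show "(1/2) *\<^sub>R proj_real 1 0 + (1/2) *\<^sub>R proj_real 0 (-1)
        = (1/2) *\<^sub>R proj_real a b + (1/2) *\<^sub>R proj_real b (-a)"
      using proj_real_add_orthogonal[of 1 0] proj_real_add_orthogonal[OF assms(1)]
      by (simp flip: scaleR_right_distrib)
  qed (use assms(1) in \<open>simp_all add: povm_effects_three_bases mtrace_proj_real_mult power2_eq_square\<close>)
  moreover have "1 < a*a + a*a - (a*a - b*b)\<^sup>2"
  proof -
    have "a*a = 1 - b*b"
      using assms(1) by simp
    then have "a*a + a*a - (a*a - b*b)\<^sup>2 = 1 + 2*(b*b)*(1 - 2*(b*b))"
      by (simp only:) (simp add: power2_eq_square algebra_simps)
    moreover have "0 < 2*(b*b)*(1 - 2*(b*b))"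
      using assms(2,3) by simp
    ultimately show ?thesis
      by simp
  qed
  ultimately show False
    by (simp add: mtrace_proj_real_mult power2_eq_square)
qed

lemma small_rotation_exists:
  fixes \<epsilon> :: real
  assumes "0 < \<epsilon>"
  obtains a b :: real where "a*a + b*b = 1" "0 < b*b" "b*b < 1/2" "0 < 2 * \<bar>a*b\<bar>" "2 * \<bar>a*b\<bar> \<le> \<epsilon>"
proof
  define b where "b = min (\<epsilon>/2) (1/2)"
  have b: "0 < b" "b \<le> 1/2" "2 * b \<le> \<epsilon>"
    using assms by (auto simp: b_def)
  then have "b*b \<le> 1/4"
    using mult_mono[of b "1/2" b "1/2"] by simp
  then show "sqrt (1 - b*b) * sqrt (1 - b*b) + b*b = 1" "0 < b*b" "b*b < 1/2"
      "0 < 2 * \<bar>sqrt (1 - b*b) * b\<bar>"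
    using b by simp_all
  have "\<bar>sqrt (1 - b*b) * b\<bar> \<le> 1 * b"
    using b \<open>b*b \<le> 1/4\<close> by (auto simp: abs_mult intro!: mult_right_mono)
  with b show "2 * \<bar>sqrt (1 - b*b) * b\<bar> \<le> \<epsilon>"
    by simp
qed

theorem mainTheorem1:
  fixes \<epsilon> :: real
  assumes "\<epsilon> > 0"
  shows "\<exists>(S::qop set) (Ms::qop list set).
           finite S \<and> (\<forall>\<rho>\<in>S. density \<rho>) \<and>
           finite Ms \<and> (\<forall>M\<in>Ms. is_povm M) \<and>
           (\<forall>X\<in>S \<union> povm_effects Ms. coh X \<le> \<epsilon>) \<and>
           (\<exists>\<rho>\<in>S. coh \<rho> > 0) \<and> (\<exists>E\<in>povm_effects Ms. coh E > 0) \<and>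
           \<not> nc_model S (povm_effects Ms)"
proof -
  obtain a b where ab: "a*a + b*b = 1" "0 < b*b" "b*b < 1/2"
    and coh_pos: "0 < 2 * \<bar>a*b\<bar>" and coh_le: "2 * \<bar>a*b\<bar> \<le> \<epsilon>"
    using small_rotation_exists[OF assms] .
  let ?Ms = "three_bases a b"
  let ?S = "povm_effects ?Ms"
  have "\<forall>M\<in>?Ms. is_povm M"
    using ab(1) by (auto simp: three_bases_def intro!: is_povm_basis_povm)
  moreover have "\<forall>\<rho>\<in>?S. density \<rho>"
    using ab(1) by (auto simp: povm_effects_three_bases algebra_simps intro!: density_proj_real)
  moreover have "\<forall>X\<in>?S. coh X \<le> \<epsilon>"
    using coh_le assms by (auto simp: povm_effects_three_bases coh_proj_real mult.commute)
  moreover have "proj_real a b \<in> ?S" "0 < coh (proj_real a b)"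
    using coh_pos by (simp_all add: povm_effects_three_bases coh_proj_real)
  moreover have "finite ?Ms"
    by (simp add: three_bases_def)
  moreover have "finite ?S"
    by (simp add: povm_effects_three_bases)
  ultimately show ?thesis
    using no_nc_model_three_bases[OF ab] by blast
qed

end
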